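(* Let $S\subseteq\Sigma^n$ be a prime double-code and $i,i'\in[n]$. Then either $\backslash_i S=\backslash_{i'}S$ or $\backslash_i S\cap\backslash_{i'}S=\emptyset$.
   Context: Let $\Sigma=\{0,1,2,3\}$, $[n]=\{1,\ldots,n\}$. An $i$-line of $\Sigma^n$ is a set of the four words that agree in all coordinates except the $i$th; a line is an $i$-line for some $i$. A double-code is a set meeting every line in $0$ or $2$ elements; a double-MDS-code is a set meeting every line in exactly $2$ elements; a double-code is complementable if contained in a double-MDS-code, and prime if complementable, nonempty and not partitionable into two or more nonempty double-codes. For $S\subseteq\Sigma^n$ and $i\in[n]$, $\mathcal E_i(S)$ is the union of all $i$-lines that meet $S$, and $\backslash_i S=\mathcal E_i(S)\setminus S$. *)

theory Defs
  imports Main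
begin

text \<open>Words of Sigma^n, Sigma = {0,1,2,3}, are functions nat => nat that take values
  below 4 on the coordinates 1..n and are 0 elsewhere.\<close>
definition words :: "nat \<Rightarrow> (nat \<Rightarrow> nat) set" where
  "words n = {w. (\<forall>j\<in>{1..n}. w j < 4) \<and> (\<forall>j. j \<notin> {1..n} \<longrightarrow> w j = 0)}"

definition iline :: "nat \<Rightarrow> (nat \<Rightarrow> nat) \<Rightarrow> (nat \<Rightarrow> nat) set" where
  "iline i w = {w(i := a) | a. a < (4::nat)}"

definition ilines :: "nat \<Rightarrow> nat \<Rightarrow> (nat \<Rightarrow> nat) set set" where
  "ilines n i = {iline i w | w. w \<in> words n}"

definition lines :: "nat \<Rightarrow> (nat \<Rightarrow> nat) set set" where
  "lines n = (\<Union>i\<in>{1..n}. ilines n i)"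

definition double_code :: "nat \<Rightarrow> (nat \<Rightarrow> nat) set \<Rightarrow> bool" where
  "double_code n S \<longleftrightarrow> S \<subseteq> words n \<and>
     (\<forall>L\<in>lines n. card (L \<inter> S) = 0 \<or> card (L \<inter> S) = 2)"

definition double_MDS_code :: "nat \<Rightarrow> (nat \<Rightarrow> nat) set \<Rightarrow> bool" where
  "double_MDS_code n S \<longleftrightarrow> S \<subseteq> words n \<and> (\<forall>L\<in>lines n. card (L \<inter> S) = 2)"

definition complementable :: "nat \<Rightarrow> (nat \<Rightarrow> nat) set \<Rightarrow> bool" where
  "complementable n S \<longleftrightarrow> double_code n S \<and> (\<exists>M. double_MDS_code n M \<and> S \<subseteq> M)"

definition partitionable :: "nat \<Rightarrow> (nat \<Rightarrow> nat) set \<Rightarrow> bool" where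
  "partitionable n S \<longleftrightarrow> (\<exists>P. 2 \<le> card P \<and> finite P \<and> \<Union>P = S \<and>
      (\<forall>A\<in>P. A \<noteq> {} \<and> double_code n A) \<and>
      (\<forall>A\<in>P. \<forall>B\<in>P. A \<noteq> B \<longrightarrow> A \<inter> B = {}))"

definition prime_double_code :: "nat \<Rightarrow> (nat \<Rightarrow> nat) set \<Rightarrow> bool" where
  "prime_double_code n S \<longleftrightarrow> complementable n S \<and> S \<noteq> {} \<and> \<not> partitionable n S"

definition ext :: "nat \<Rightarrow> nat \<Rightarrow> (nat \<Rightarrow> nat) set \<Rightarrow> (nat \<Rightarrow> nat) set" where
  "ext n i S = \<Union>{L \<in> ilines n i. L \<inter> S \<noteq> {}}"

definition bslash :: "nat \<Rightarrow> nat \<Rightarrow> (nat \<Rightarrow> nat) set \<Rightarrow> (nat \<Rightarrow> nat) set" where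
  "bslash n i S = ext n i S - S"

end

theory Submission
  imports Defs
begin

(* Fix a double-MDS-code M containing S.  On every line, S meets either nothing or exactly
   the two points of M there.  Call s in S saturated if S and M agree on the {i,i'}-face
   through s.  If x lies in both backslash_i S and backslash_i' S, a counting argument in the
   4x4 face through x shows that this face is saturated.  A case analysis in a 4x4x4 cube
   shows that saturation passes along any line joining two points of S, so the saturated
   points form a sub-double-code and, S being prime, all of S is saturated.  On a saturated
   face every i'-line meets S, whence backslash_i S is contained in backslash_i' S; the
   reverse inclusion is symmetric. *)

lemma fun_upd_in_words: "w \<in> words n \<Longrightarrow> k \<in> {1..n} \<Longrightarrow> a < 4 \<Longrightarrow> w(k := a) \<in> words n"
  unfolding words_def by auto

lemma words_less_4: "w \<in> words n \<Longrightarrow> k \<in> {1..n} \<Longrightarrow> w k < 4"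
  unfolding words_def by auto

lemma lines_iline: "w \<in> words n \<Longrightarrow> k \<in> {1..n} \<Longrightarrow> iline k w \<in> lines n"
  unfolding lines_def ilines_def by blast

lemma linesE:
  assumes "L \<in> lines n"
  obtains k w where "k \<in> {1..n}" "w \<in> words n" "L = iline k w"
  using assms unfolding lines_def ilines_def by blast

lemma bslash_eq:
  assumes "k \<in> {1..n}"
  shows "bslash n k S = {x \<in> words n. \<exists>a<4. x(k := a) \<in> S} - S"
proof -
  have "ext n k S = {x \<in> words n. \<exists>a<4. x(k := a) \<in> S}"
  proof (intro equalityI subsetI)
    fix x assume "x \<in> ext n k S"
    then obtain w where w: "w \<in> words n" "x \<in> iline k w" "iline k w \<inter> S \<noteq> {}"
      unfolding ext_def ilines_def by blast
    then obtain c a where "c < 4" "x = w(k := c)" "a < 4" "w(k := a) \<in> S"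
      unfolding iline_def by blast
    then show "x \<in> {x \<in> words n. \<exists>a<4. x(k := a) \<in> S}"
      using fun_upd_in_words[OF w(1) assms] by auto
  next
    fix x assume "x \<in> {x \<in> words n. \<exists>a<4. x(k := a) \<in> S}"
    then obtain a where x: "x \<in> words n" "a < 4" "x(k := a) \<in> S" by blast
    have "x = x(k := x k)" by simp
    then have "x \<in> iline k x" and "iline k x \<inter> S \<noteq> {}"
      using words_less_4[OF x(1) assms] x unfolding iline_def by blast+
    then show "x \<in> ext n k S"
      using x(1) unfolding ext_def ilines_def by blast
  qed
  then show ?thesis unfolding bslash_def by simp
qed

lemma double_code_subset_closed:
  assumes "double_code n S" "G \<subseteq> S"
    and closed: "\<And>s k c. s \<in> G \<Longrightarrow> k \<in> {1..n} \<Longrightarrow> c < 4 \<Longrightarrow> s(k := c) \<in> S \<Longrightarrow> s(k := c) \<in> G"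
  shows "double_code n G"
  unfolding double_code_def
proof (intro conjI ballI)
  show "G \<subseteq> words n"
    using assms unfolding double_code_def by blast
next
  fix L assume "L \<in> lines n"
  then obtain k w where "k \<in> {1..n}" "w \<in> words n" "L = iline k w"
    by (rule linesE)
  have "L \<inter> G = L \<inter> S" if "s \<in> L \<inter> G" for s
  proof
    obtain a where "s = w(k := a)"
      using \<open>s \<in> L \<inter> G\<close> \<open>L = iline k w\<close> unfolding iline_def by blast
    then show "L \<inter> S \<subseteq> L \<inter> G"
      using closed[of s k] \<open>s \<in> L \<inter> G\<close> \<open>k \<in> {1..n}\<close> \<open>L = iline k w\<close>
      unfolding iline_def by fastforce
  qed (use \<open>G \<subseteq> S\<close> in blast)
  then show "card (L \<inter> G) = 0 \<or> card (L \<inter> G) = 2"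
    using assms(1) \<open>L \<in> lines n\<close> unfolding double_code_def by (metis card.empty ex_in_conv)
qed

lemma not_partitionable_propagate:
  assumes "double_code n S" "\<not> partitionable n S" "s0 \<in> S" "\<phi> s0"
    and step: "\<And>s k c. s \<in> S \<Longrightarrow> \<phi> s \<Longrightarrow> k \<in> {1..n} \<Longrightarrow> c < 4 \<Longrightarrow> s(k := c) \<in> S \<Longrightarrow> \<phi> (s(k := c))"
    and "s \<in> S"
  shows "\<phi> s"
proof (rule ccontr)
  assume "\<not> \<phi> s"
  define F where "F = {s \<in> S. \<phi> s}"
  have "double_code n F"
    using assms(1) by (rule double_code_subset_closed) (auto simp: F_def intro: step)
  moreover have "double_code n (S - F)"
  proof (rule double_code_subset_closed[OF assms(1)])
    fix s k c assume "s \<in> S - F" "k \<in> {1..n}" "c < 4" "s(k := c) \<in> S"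
    moreover have "s k < 4"
      using \<open>s \<in> S - F\<close> \<open>k \<in> {1..n}\<close> assms(1) words_less_4 unfolding double_code_def by blast
    ultimately show "s(k := c) \<in> S - F"
      using step[of "s(k := c)" k "s k"] unfolding F_def by auto
  qed blast
  moreover have "F \<noteq> {}" "S - F \<noteq> {}" "F \<noteq> S - F"
    using assms \<open>\<not> \<phi> s\<close> unfolding F_def by blast+
  ultimately have "partitionable n S"
    unfolding partitionable_def by (intro exI[of _ "{F, S - F}"]) (auto simp: F_def)
  with assms(2) show False ..
qed

(* P and Q are the traces of a double-code S and of a double-MDS-code M containing it
   on a line a \<mapsto> u(k := a), a < 4. *)
definition double_line :: "(nat \<Rightarrow> bool) \<Rightarrow> (nat \<Rightarrow> bool) \<Rightarrow> bool" where
  "double_line P Q \<longleftrightarrow>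
     card {a. a < 4 \<and> Q a} = 2 \<and> ((\<forall>a<4. \<not> P a) \<or> (\<forall>a<4. P a \<longleftrightarrow> Q a))"

lemma double_line_two:
  assumes "double_line P Q"
  obtains q1 q2 where "q1 < 4" "q2 < 4" "q1 \<noteq> q2" "Q q1" "Q q2"
    and "\<And>a. a < 4 \<Longrightarrow> Q a \<Longrightarrow> a = q1 \<or> a = q2"
proof -
  obtain q1 q2 where "{a. a < 4 \<and> Q a} = {q1, q2}" "q1 \<noteq> q2"
    using assms unfolding double_line_def card_2_iff by blast
  then have "a < 4 \<and> Q a \<longleftrightarrow> a = q1 \<or> a = q2" for a
    by blast
  with \<open>q1 \<noteq> q2\<close> show thesis
    using that by blast
qed

lemma double_line_eq:
  assumes "double_line P Q" "a0 < 4" "P a0" "a < 4"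
  shows "P a \<longleftrightarrow> Q a"
  using assms unfolding double_line_def by blast

lemma double_line_imp: "double_line P Q \<Longrightarrow> a < 4 \<Longrightarrow> P a \<Longrightarrow> Q a"
  using double_line_eq by blast

lemma double_line_third:
  assumes "double_line P Q" "a < 4" "b < 4" "c < 4" "a \<noteq> b" "Q a" "Q b" "Q c"
  shows "c = a \<or> c = b"
  using assms by (elim double_line_two) metis

lemma double_line_other:
  assumes "double_line P Q" "a0 < 4" "P a0"
  obtains a1 where "a1 < 4" "a1 \<noteq> a0" "P a1"
proof -
  obtain q1 q2 where "q1 < 4" "q2 < 4" "q1 \<noteq> q2" "Q q1" "Q q2"
    using assms(1) by (rule double_line_two)
  then show thesis
    using that double_line_eq[OF assms] by metis
qed

lemma double_line_complement:
  assumes "double_line P Q" "a0 < 4" "a1 < 4" "a < 4" "a0 \<noteq> a1" "a \<noteq> a0" "a \<noteq> a1"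
    and "\<not> Q a0" "\<not> Q a1"
  shows "Q a"
proof (rule ccontr)
  assume "\<not> Q a"
  obtain q1 q2 where q: "q1 < 4" "q2 < 4" "q1 \<noteq> q2" "Q q1" "Q q2"
    using assms(1) by (rule double_line_two)
  have "distinct [a0, a1, a, q1, q2]"
    using assms q \<open>\<not> Q a\<close> by auto
  moreover have "set [a0, a1, a, q1, q2] \<subseteq> {..<4}"
    using assms q by auto
  ultimately have "card (set [a0, a1, a, q1, q2]) \<le> card {..<4::nat}"
    by (intro card_mono) auto
  with \<open>distinct [a0, a1, a, q1, q2]\<close> show False
    by (simp only: distinct_card) simp
qed

definition double_grid :: "(nat \<Rightarrow> nat \<Rightarrow> bool) \<Rightarrow> (nat \<Rightarrow> nat \<Rightarrow> bool) \<Rightarrow> bool" where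
  "double_grid P Q \<longleftrightarrow>
     (\<forall>b<4. double_line (\<lambda>a. P a b) (\<lambda>a. Q a b)) \<and> (\<forall>a<4. double_line (P a) (Q a))"

lemma double_grid_row: "double_grid P Q \<Longrightarrow> b < 4 \<Longrightarrow> double_line (\<lambda>a. P a b) (\<lambda>a. Q a b)"
  and double_grid_column: "double_grid P Q \<Longrightarrow> a < 4 \<Longrightarrow> double_line (P a) (Q a)"
  unfolding double_grid_def by blast+

lemma double_grid_eq_if_rows:
  assumes "double_grid P Q" "\<And>b. b < 4 \<Longrightarrow> \<exists>a<4. P a b" "a < 4" "b < 4"
  shows "P a b \<longleftrightarrow> Q a b"
  using assms double_line_eq[OF double_grid_row] by meson

lemma double_grid_saturated:
  assumes grid: "double_grid P Q" and "ax < 4" "bx < 4" "\<not> P ax bx"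
    and "a' < 4" "P a' bx" "b' < 4" "P ax b'" and "a < 4" "b < 4"
  shows "P a b \<longleftrightarrow> Q a b"
proof (rule double_grid_eq_if_rows[OF grid _ \<open>a < 4\<close> \<open>b < 4\<close>], rule ccontr)
  fix b assume "b < 4" and empty: "\<not> (\<exists>a<4. P a b)"
  obtain a1 where "a1 < 4" "a1 \<noteq> a'" "P a1 bx"
    using double_grid_row[OF grid \<open>bx < 4\<close>] \<open>a' < 4\<close> \<open>P a' bx\<close> by (rule double_line_other)
  have column: "P a b \<longleftrightarrow> Q a b" if "a < 4" "b0 < 4" "P a b0" for a b0
    using double_line_eq[OF double_grid_column[OF grid \<open>a < 4\<close>] \<open>b0 < 4\<close> \<open>P a b0\<close> \<open>b < 4\<close>] .
  have "\<not> Q a' b" "\<not> Q a1 b"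
    using column empty assms \<open>a1 < 4\<close> \<open>P a1 bx\<close> by blast+
  then have "Q ax b"
    using double_line_complement[OF double_grid_row[OF grid \<open>b < 4\<close>]] assms \<open>a1 < 4\<close> \<open>a1 \<noteq> a'\<close>
      \<open>P a1 bx\<close> by metis
  then show False
    using column empty assms by blast
qed

lemma double_grid_block:
  assumes grid: "double_grid P Q" and "a0 < 4" "a1 < 4" "b0 < 4" "b1 < 4" "a1 \<noteq> a0" "b1 \<noteq> b0"
    and "P a0 b0" "P a1 b0" "P a0 b1" and "bs < 4" "\<forall>a<4. \<not> P a bs"
    and "a < 4" "b < 4" "a \<noteq> a0" "a \<noteq> a1" "b \<noteq> b0" "b \<noteq> b1"
  shows "Q a b \<and> \<not> P a b"
proof -
  have column_eq: "P a b \<longleftrightarrow> Q a b" if "a < 4" "b < 4" "b' < 4" "P a b'" for a b b'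
    using double_line_eq[OF double_grid_column[OF grid]] that by blast
  have empty_row: "Q a b"
    if "b < 4" "\<forall>a<4. \<not> P a b" "a < 4" "a \<noteq> a0" "a \<noteq> a1" for a b
  proof -
    have "\<not> Q a0 b" "\<not> Q a1 b"
      using column_eq that assms by blast+
    then show "Q a b"
      using double_line_complement[OF double_grid_row[OF grid \<open>b < 4\<close>]] that assms by blast
  qed
  have sparse: "\<not> P a b" if "a < 4" "a \<noteq> a0" "a \<noteq> a1" "b < 4" for a b
    using empty_row[of bs a] column_eq[of a bs b] that assms by blast
  have "\<forall>a<4. \<not> P a b"
  proof (intro allI impI notI)
    fix a' assume "a' < 4" "P a' b"
    obtain a'' where "a'' < 4" "a'' \<noteq> a'" "P a'' b"
      using double_grid_row[OF grid \<open>b < 4\<close>] \<open>a' < 4\<close> \<open>P a' b\<close> by (rule double_line_other)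
    then have "P a0 b"
      using sparse \<open>a' < 4\<close> \<open>P a' b\<close> \<open>b < 4\<close> by metis
    then show False
      using double_line_third[OF double_grid_column[OF grid \<open>a0 < 4\<close>], of b0 b1 b]
        double_line_imp[OF double_grid_column[OF grid]] assms by metis
  qed
  then show ?thesis
    using empty_row sparse assms by blast
qed

(* If a row of layer c1 missed P, each row b of layer c0 outside b0, b1 would have its two
   points in the columns a0, a1, so column a0 of layer c0 would contain three points. *)
lemma double_cube_saturated:
  assumes layer: "\<And>c. c < 4 \<Longrightarrow> double_grid (\<lambda>a b. P a b c) (\<lambda>a b. Q a b c)"
    and vertical: "\<And>a b. a < 4 \<Longrightarrow> b < 4 \<Longrightarrow> double_line (P a b) (Q a b)"
    and saturated: "\<And>a b. a < 4 \<Longrightarrow> b < 4 \<Longrightarrow> P a b c0 \<longleftrightarrow> Q a b c0"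
    and "a0 < 4" "b0 < 4" "c0 < 4" "c1 < 4" "P a0 b0 c0" "P a0 b0 c1"
    and "a < 4" "b < 4"
  shows "P a b c1 \<longleftrightarrow> Q a b c1"
proof (rule double_grid_eq_if_rows[OF layer[OF \<open>c1 < 4\<close>] _ \<open>a < 4\<close> \<open>b < 4\<close>], rule ccontr)
  fix bs assume "bs < 4" and "\<not> (\<exists>a<4. P a bs c1)"
  note layer0 = layer[OF \<open>c0 < 4\<close>] and layer1 = layer[OF \<open>c1 < 4\<close>]
  obtain a1 where "a1 < 4" "a1 \<noteq> a0" "P a1 b0 c1"
    using double_grid_row[OF layer1 \<open>b0 < 4\<close>] \<open>a0 < 4\<close> \<open>P a0 b0 c1\<close> by (rule double_line_other)
  obtain b1 where "b1 < 4" "b1 \<noteq> b0" "P a0 b1 c1"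
    using double_grid_column[OF layer1 \<open>a0 < 4\<close>] \<open>b0 < 4\<close> \<open>P a0 b0 c1\<close>
    by (rule double_line_other)
  have column_a0: "P a0 b c0" if "b < 4" "b \<noteq> b0" "b \<noteq> b1" for b
  proof -
    have "\<not> Q a b c0" if "a < 4" "a \<noteq> a0" "a \<noteq> a1" for a
    proof -
      have "Q a b c1 \<and> \<not> P a b c1"
        using double_grid_block[OF layer1] \<open>a1 < 4\<close> \<open>a1 \<noteq> a0\<close> \<open>P a1 b0 c1\<close> \<open>b1 < 4\<close>
          \<open>b1 \<noteq> b0\<close> \<open>P a0 b1 c1\<close> \<open>bs < 4\<close> \<open>\<not> (\<exists>a<4. P a bs c1)\<close> assms
          \<open>b < 4\<close> \<open>b \<noteq> b0\<close> \<open>b \<noteq> b1\<close> that by blast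
      then show ?thesis
        using double_line_eq[OF vertical[of a b]] saturated that \<open>b < 4\<close> assms by blast
    qed
    moreover obtain q1 q2 where "q1 < 4" "q2 < 4" "q1 \<noteq> q2" "Q q1 b c0" "Q q2 b c0"
      using double_grid_row[OF layer0 \<open>b < 4\<close>] by (rule double_line_two)
    ultimately show ?thesis
      using saturated assms \<open>b < 4\<close> by metis
  qed
  have "\<exists>b2 b3. b2 < 4 \<and> b3 < 4 \<and> b2 \<noteq> b3 \<and> b2 \<noteq> b0 \<and> b2 \<noteq> b1 \<and> b3 \<noteq> b0 \<and> b3 \<noteq> b1"
    using \<open>b0 < 4\<close> \<open>b1 < 4\<close> by presburger
  then obtain b2 b3 where "b2 < 4" "b3 < 4" "b2 \<noteq> b3" "b2 \<noteq> b0" "b2 \<noteq> b1" "b3 \<noteq> b0" "b3 \<noteq> b1"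
    by blast
  then show False
    using double_line_third[OF double_grid_column[OF layer0 \<open>a0 < 4\<close>], of b0 b2 b3]
      double_line_imp[OF double_grid_column[OF layer0]] column_a0 assms by metis
qed

locale double_code_in_MDS =
  fixes n :: nat and S M :: "(nat \<Rightarrow> nat) set"
  assumes double_code: "double_code n S" and MDS: "double_MDS_code n M" and subset: "S \<subseteq> M"
begin

lemma S_in_words: "s \<in> S \<Longrightarrow> s \<in> words n"
  using double_code unfolding double_code_def by blast

lemma line_inter_cases:
  assumes "L \<in> lines n"
  shows "L \<inter> S = {} \<or> L \<inter> S = L \<inter> M"
proof -
  have "card (L \<inter> M) = 2" "card (L \<inter> S) = 0 \<or> card (L \<inter> S) = 2"
    using assms double_code MDS unfolding double_code_def double_MDS_code_def by blast+
  moreover have "L \<inter> S \<subseteq> L \<inter> M"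
    using subset by blast
  moreover have "finite (L \<inter> M)"
    using \<open>card (L \<inter> M) = 2\<close> by (intro card_ge_0_finite) simp
  ultimately show ?thesis
    by (metis card_subset_eq card_0_eq finite_subset)
qed

lemma line_double_line:
  assumes "u \<in> words n" "k \<in> {1..n}" and f: "\<And>a. f a = u(k := a)"
  shows "double_line (\<lambda>a. f a \<in> S) (\<lambda>a. f a \<in> M)"
proof -
  have line: "iline k u = f ` {..<4}"
    unfolding iline_def f by auto
  have "inj f"
    by (rule injI) (metis f fun_upd_same)
  have "iline k u \<inter> M = f ` {a. a < 4 \<and> f a \<in> M}"
    unfolding line by auto
  then have "card {a. a < 4 \<and> f a \<in> M} = 2"
    using MDS lines_iline[OF assms(1,2)] card_image[OF inj_on_subset[OF \<open>inj f\<close>]]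
    unfolding double_MDS_code_def by (metis subset_UNIV)
  moreover have "(\<forall>a<4. f a \<notin> S) \<or> (\<forall>a<4. f a \<in> S \<longleftrightarrow> f a \<in> M)"
    using line_inter_cases[OF lines_iline[OF assms(1,2)]] unfolding line by blast
  ultimately show ?thesis
    unfolding double_line_def by blast
qed

definition saturated :: "nat \<Rightarrow> nat \<Rightarrow> (nat \<Rightarrow> nat) \<Rightarrow> bool" where
  "saturated i i' x \<longleftrightarrow> (\<forall>a<4. \<forall>b<4. x(i := a, i' := b) \<in> S \<longleftrightarrow> x(i := a, i' := b) \<in> M)"

lemma face_double_grid:
  assumes "x \<in> words n" "i \<in> {1..n}" "i' \<in> {1..n}" "i \<noteq> i'"
  shows "double_grid (\<lambda>a b. x(i := a, i' := b) \<in> S) (\<lambda>a b. x(i := a, i' := b) \<in> M)"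
  unfolding double_grid_def
proof (intro conjI allI impI)
  fix b :: nat assume "b < 4"
  show "double_line (\<lambda>a. x(i := a, i' := b) \<in> S) (\<lambda>a. x(i := a, i' := b) \<in> M)"
    using line_double_line[OF fun_upd_in_words[OF assms(1,3) \<open>b < 4\<close>] assms(2)]
    by (metis assms(4) fun_upd_twist)
next
  fix a :: nat assume "a < 4"
  show "double_line (\<lambda>b. x(i := a, i' := b) \<in> S) (\<lambda>b. x(i := a, i' := b) \<in> M)"
    using line_double_line[OF fun_upd_in_words[OF assms(1,2) \<open>a < 4\<close>] assms(3)] by blast
qed

lemma saturated_step:
  assumes face: "i \<in> {1..n}" "i' \<in> {1..n}" "i \<noteq> i'"
    and "s \<in> S" "saturated i i' s" "k \<in> {1..n}" "c1 < 4" "s(k := c1) \<in> S"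
  shows "saturated i i' (s(k := c1))"
proof (cases "k = i \<or> k = i'")
  case True
  then have "s(k := c1, i := a, i' := b) = s(i := a, i' := b)" for a b
    using face by (auto simp: fun_eq_iff)
  then show ?thesis
    using \<open>saturated i i' s\<close> unfolding saturated_def by simp
next
  case False
  define P where "P a b c \<longleftrightarrow> s(k := c, i := a, i' := b) \<in> S" for a b c
  define Q where "Q a b c \<longleftrightarrow> s(k := c, i := a, i' := b) \<in> M" for a b c
  have "s \<in> words n"
    using \<open>s \<in> S\<close> by (rule S_in_words)
  have "P a b c1 \<longleftrightarrow> Q a b c1" if "a < 4" "b < 4" for a b
  proof (rule double_cube_saturated[where ?a0.0 = "s i" and ?b0.0 = "s i'" and ?c0.0 = "s k"])
    show "double_grid (\<lambda>a b. P a b c) (\<lambda>a b. Q a b c)" if "c < 4" for c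
      unfolding P_def Q_def
      using face_double_grid[OF fun_upd_in_words[OF \<open>s \<in> words n\<close> \<open>k \<in> {1..n}\<close> that] face] .
    show "double_line (P a b) (Q a b)" if "a < 4" "b < 4" for a b
      unfolding P_def Q_def
      using line_double_line[OF fun_upd_in_words[OF fun_upd_in_words[OF \<open>s \<in> words n\<close>]]]
        \<open>k \<in> {1..n}\<close> face that False by (auto simp: fun_eq_iff)
    show "P a b (s k) \<longleftrightarrow> Q a b (s k)" if "a < 4" "b < 4" for a b
      using \<open>saturated i i' s\<close> that unfolding P_def Q_def saturated_def by simp
    show "s i < 4" "s i' < 4" "s k < 4"
      using words_less_4 \<open>s \<in> words n\<close> face \<open>k \<in> {1..n}\<close> by blast+
    have "s(k := c1, i := s i, i' := s i') = s(k := c1)"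
      using False by (auto simp: fun_eq_iff)
    then show "P (s i) (s i') (s k)" "P (s i) (s i') c1"
      using \<open>s \<in> S\<close> \<open>s(k := c1) \<in> S\<close> unfolding P_def by simp_all
  qed fact+
  then show ?thesis
    unfolding saturated_def P_def Q_def by blast
qed

lemma saturated_if_crossing:
  assumes face: "i \<in> {1..n}" "i' \<in> {1..n}" "i \<noteq> i'"
    and x: "x \<in> bslash n i S" "x \<in> bslash n i' S"
  obtains s where "s \<in> S" "saturated i i' s"
proof -
  have "x \<in> words n" "x \<notin> S"
    using x bslash_eq[OF face(1)] by auto
  obtain a' where "a' < 4" "x(i := a') \<in> S"
    using x bslash_eq[OF face(1)] by auto
  obtain b' where "b' < 4" "x(i' := b') \<in> S"
    using x bslash_eq[OF face(2)] by auto
  have "x(i := a', i' := x i') = x(i := a')"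
    using face by (auto simp: fun_eq_iff)
  then have "x(i := a, i' := b) \<in> S \<longleftrightarrow> x(i := a, i' := b) \<in> M" if "a < 4" "b < 4" for a b
    using double_grid_saturated[OF face_double_grid[OF \<open>x \<in> words n\<close> face], of "x i" "x i'" a' b']
      words_less_4[OF \<open>x \<in> words n\<close>] face \<open>x \<notin> S\<close> \<open>a' < 4\<close> \<open>x(i := a') \<in> S\<close>
      \<open>b' < 4\<close> \<open>x(i' := b') \<in> S\<close> that
    by simp
  then have "saturated i i' (x(i := a'))"
    unfolding saturated_def by simp
  with \<open>x(i := a') \<in> S\<close> show thesis ..
qed

lemma bslash_subset_if_saturated:
  assumes face: "i \<in> {1..n}" "i' \<in> {1..n}" "i \<noteq> i'"
    and saturated: "\<And>s. s \<in> S \<Longrightarrow> saturated i i' s"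
  shows "bslash n i S \<subseteq> bslash n i' S"
proof
  fix y assume "y \<in> bslash n i S"
  then obtain a where "y \<in> words n" "y \<notin> S" "a < 4" "y(i := a) \<in> S"
    using bslash_eq[OF face(1)] by auto
  obtain b where "b < 4" "y(i := y i, i' := b) \<in> M"
    using double_grid_column[OF face_double_grid[OF \<open>y \<in> words n\<close> face]]
      words_less_4[OF \<open>y \<in> words n\<close> face(1)] by (metis double_line_two)
  then have "y(i' := b) \<in> S"
    using saturated[OF \<open>y(i := a) \<in> S\<close>] words_less_4[OF \<open>y \<in> words n\<close> face(1)]
    unfolding saturated_def by force
  then show "y \<in> bslash n i' S"
    using bslash_eq[OF face(2)] \<open>y \<in> words n\<close> \<open>y \<notin> S\<close> \<open>b < 4\<close> by blast
qed

lemma bslash_subset_if_crossing: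
  assumes "\<not> partitionable n S" and face: "i \<in> {1..n}" "i' \<in> {1..n}" "i \<noteq> i'"
    and "x \<in> bslash n i S" "x \<in> bslash n i' S"
  shows "bslash n i S \<subseteq> bslash n i' S"
proof (rule bslash_subset_if_saturated[OF face])
  obtain s0 where "s0 \<in> S" "saturated i i' s0"
    using saturated_if_crossing[OF face] assms by blast
  show "saturated i i' s" if "s \<in> S" for s
    using not_partitionable_propagate[OF double_code \<open>\<not> partitionable n S\<close> \<open>s0 \<in> S\<close>
        \<open>saturated i i' s0\<close> saturated_step[OF face] \<open>s \<in> S\<close>] .
qed

end

theorem proposition6:
  fixes n i i' :: nat and S :: "(nat \<Rightarrow> nat) set"
  assumes "prime_double_code n S"
    and "i \<in> {1..n}" and "i' \<in> {1..n}"
  shows "bslash n i S = bslash n i' S \<or> bslash n i S \<inter> bslash n i' S = {}"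
proof (cases "i = i' \<or> bslash n i S \<inter> bslash n i' S = {}")
  case False
  then obtain x where "i \<noteq> i'" "x \<in> bslash n i S" "x \<in> bslash n i' S"
    by blast
  obtain M where "double_MDS_code n M" "S \<subseteq> M" "double_code n S" "\<not> partitionable n S"
    using assms(1) unfolding prime_double_code_def complementable_def by blast
  then interpret double_code_in_MDS n S M
    by unfold_locales
  have "bslash n i S \<subseteq> bslash n i' S" "bslash n i' S \<subseteq> bslash n i S"
    using bslash_subset_if_crossing \<open>\<not> partitionable n S\<close> assms(2,3) \<open>i \<noteq> i'\<close>
      \<open>x \<in> bslash n i S\<close> \<open>x \<in> bslash n i' S\<close> by blast+
  then show ?thesis
    by blast
qed auto

end
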